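(* Let $(X_t)$ be an irreducible continuous-time Markov chain on a finite state space $S$ with stationary distribution $\pi$. For $s\ge0$ and $x\in S$ let $W_x$ be the Lebesgue measure of $\{0<t<s:X_t=x\}$. Then there is a constant $c$, independent of $s$, such that for every event $A\in\sigma(W_x:x\in S)$ and every $y\in S$, $$\mathbf P_y(A)\le c\max_{z\in S}\tilde{\mathbf P}_z(A),$$ where $\tilde{\mathbf P}_z$ denotes probability for the time-reversed chain started at $z$. *)

theory Defs
  imports "HOL-Probability.Probability"
begin

definition generator :: "('s::finite \<Rightarrow> 's \<Rightarrow> real) \<Rightarrow> bool" where
  "generator Q \<longleftrightarrow> (\<forall>x y. x \<noteq> y \<longrightarrow> Q x y \<ge> 0) \<and> (\<forall>x. (\<Sum>y\<in>UNIV. Q x y) = 0)"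

definition irreducible_gen :: "('s::finite \<Rightarrow> 's \<Rightarrow> real) \<Rightarrow> bool" where
  "irreducible_gen Q \<longleftrightarrow> (\<forall>x y. (x, y) \<in> {(a, b). a \<noteq> b \<and> Q a b > 0}\<^sup>*)"

definition stationary :: "('s::finite \<Rightarrow> 's \<Rightarrow> real) \<Rightarrow> ('s \<Rightarrow> real) \<Rightarrow> bool" where
  "stationary Q \<pi> \<longleftrightarrow> (\<forall>x. \<pi> x \<ge> 0) \<and> (\<Sum>x\<in>UNIV. \<pi> x) = 1 \<and> (\<forall>y. (\<Sum>x\<in>UNIV. \<pi> x * Q x y) = 0)"

definition reversed_gen :: "('s::finite \<Rightarrow> 's \<Rightarrow> real) \<Rightarrow> ('s \<Rightarrow> real) \<Rightarrow> 's \<Rightarrow> 's \<Rightarrow> real" where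
  "reversed_gen Q \<pi> x y = \<pi> y * Q y x / \<pi> x"

fun mpow :: "('s::finite \<Rightarrow> 's \<Rightarrow> real) \<Rightarrow> nat \<Rightarrow> 's \<Rightarrow> 's \<Rightarrow> real" where
  "mpow Q 0 x y = (if x = y then 1 else 0)"
| "mpow Q (Suc k) x y = (\<Sum>z\<in>UNIV. mpow Q k x z * Q z y)"

definition trans_fun :: "('s::finite \<Rightarrow> 's \<Rightarrow> real) \<Rightarrow> real \<Rightarrow> 's \<Rightarrow> 's \<Rightarrow> real" where
  "trans_fun Q t x y = (\<Sum>k. t ^ k / fact k * mpow Q k x y)"

text \<open>Sample paths are right-continuous step functions on [0,\<infinity>) with left limits
  (locally constant to the right of every t \<ge> 0 and to the left of every t > 0).\<close>
definition regular_path :: "(real \<Rightarrow> 's) \<Rightarrow> bool" where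
  "regular_path w \<longleftrightarrow>
     (\<forall>t\<ge>0. \<exists>\<delta>>0. \<forall>u. t \<le> u \<and> u < t + \<delta> \<longrightarrow> w u = w t) \<and>
     (\<forall>t>0. \<exists>\<delta>>0. \<forall>u v. t - \<delta> < u \<and> u < t \<and> t - \<delta> < v \<and> v < t \<longrightarrow> w u = w v)"

definition ctmc :: "('s::finite \<Rightarrow> 's \<Rightarrow> real) \<Rightarrow> 's \<Rightarrow> 'w measure \<Rightarrow> (real \<Rightarrow> 'w \<Rightarrow> 's) \<Rightarrow> bool" where
  "ctmc Q y M X \<longleftrightarrow> prob_space M \<and>
     (\<forall>t\<ge>0. X t \<in> M \<rightarrow>\<^sub>M count_space UNIV) \<and>
     (\<forall>\<omega>\<in>space M. regular_path (\<lambda>t. X t \<omega>)) \<and>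
     (\<forall>(n::nat) (t::nat \<Rightarrow> real) (x::nat \<Rightarrow> 's).
        t 0 = 0 \<and> (\<forall>i<n. t i \<le> t (Suc i)) \<longrightarrow>
        measure M {\<omega>\<in>space M. \<forall>i\<le>n. X (t i) \<omega> = x i}
          = (if x 0 = y then 1 else 0) * (\<Prod>i<n. trans_fun Q (t (Suc i) - t i) (x i) (x (Suc i))))"

definition occ :: "real \<Rightarrow> (real \<Rightarrow> 'w \<Rightarrow> 's) \<Rightarrow> 'w \<Rightarrow> 's \<Rightarrow> real" where
  "occ s X \<omega> x = measure lborel {t. 0 < t \<and> t < s \<and> X t \<omega> = x}"

end

(* Irreducibility makes \<pi> positive, and then P_t = exp(tQ) and the transition function P'_t of the
   reversed generator satisfy \<pi> a P'_t(a,b) = \<pi> b P_t(b,a). Telescoped along a path, this says that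
   \<pi> y times the law under P_y of the path on [0,s] restricted to X_s = w equals \<pi> w times the
   law of the reversed path t \<mapsto> Y_(s-t) of the reversed chain started at w, restricted to Y_s = y:
   first for finitely many dyadic times, hence on the product sigma-algebra over all dyadic times.
   By right-continuity the occupation vector is a limit of Riemann sums over dyadic times, and these
   sums are invariant under reversal, so occupation events correspond to the same set of sampled
   paths on both sides. Summing over w gives \<pi> y P_y(A) = \<Sum>w \<pi> w P'_w(A, Y_s = y) \<le> max_z P'_z(A),
   i.e. the claim with c = max_z 1/\<pi> z. *)

theory Submission
  imports Defs
begin

lemma mpow_Suc_left: "mpow Q (Suc k) x y = (\<Sum>z\<in>UNIV. Q x z * mpow Q k z y)"
proof (induction k arbitrary: y)
  case 0
  have "(\<Sum>z\<in>UNIV. (if x = z then 1 else 0) * Q z y) = (\<Sum>z\<in>UNIV. if x = z then Q z y else 0)"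
    by (intro sum.cong) auto
  moreover have "(\<Sum>z\<in>UNIV. Q x z * (if z = y then 1 else 0)) = (\<Sum>z\<in>UNIV. if z = y then Q x z else 0)"
    by (intro sum.cong) auto
  ultimately show ?case by simp
next
  case (Suc k)
  have "mpow Q (Suc (Suc k)) x y = (\<Sum>u\<in>UNIV. (\<Sum>z\<in>UNIV. Q x z * mpow Q k z u) * Q u y)"
    using Suc by simp
  also have "\<dots> = (\<Sum>z\<in>UNIV. Q x z * (\<Sum>u\<in>UNIV. mpow Q k z u * Q u y))"
    by (simp add: sum_distrib_left sum_distrib_right mult.assoc) (rule sum.swap)
  finally show ?case by simp
qed

lemma abs_mpow_le: "\<bar>mpow Q k x y\<bar> \<le> (\<Sum>a\<in>UNIV. \<Sum>b\<in>UNIV. \<bar>Q a b\<bar>) ^ k"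
proof (induction k arbitrary: y)
  case 0
  then show ?case by simp
next
  case (Suc k)
  define R where "R = (\<Sum>a\<in>UNIV. \<Sum>b\<in>UNIV. \<bar>Q a b\<bar>)"
  have "\<bar>mpow Q (Suc k) x y\<bar> \<le> (\<Sum>z\<in>UNIV. \<bar>mpow Q k x z\<bar> * \<bar>Q z y\<bar>)"
    by (simp add: abs_mult[symmetric])
  also have "\<dots> \<le> (\<Sum>z\<in>UNIV. R ^ k * \<bar>Q z y\<bar>)"
    unfolding R_def by (intro sum_mono mult_right_mono Suc) auto
  also have "\<dots> = R ^ k * (\<Sum>z\<in>UNIV. \<bar>Q z y\<bar>)"
    by (simp add: sum_distrib_left)
  also have "\<dots> \<le> R ^ k * R"
    unfolding R_def by (intro mult_left_mono sum_mono member_le_sum zero_le_power sum_nonneg) auto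
  finally show ?case
    by (simp add: R_def mult.commute)
qed

lemma summable_trans_fun: "summable (\<lambda>k. t ^ k / fact k * mpow Q k x y)"
proof -
  define R where "R = (\<Sum>a\<in>UNIV. \<Sum>b\<in>UNIV. \<bar>Q a b\<bar>)"
  have "summable (\<lambda>k. inverse (fact k) * (\<bar>t\<bar> * R) ^ k)"
    by (rule summable_exp)
  then show ?thesis
  proof (rule summable_comparison_test'[where N = 0])
    fix k :: nat
    have "norm (t ^ k / fact k * mpow Q k x y) = \<bar>t\<bar> ^ k / fact k * \<bar>mpow Q k x y\<bar>"
      by (simp add: abs_mult power_abs)
    also have "\<dots> \<le> \<bar>t\<bar> ^ k / fact k * R ^ k"
      unfolding R_def by (intro mult_left_mono abs_mpow_le) auto
    also have "\<dots> = inverse (fact k) * (\<bar>t\<bar> * R) ^ k"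
      by (simp add: power_mult_distrib field_simps)
    finally show "norm (t ^ k / fact k * mpow Q k x y) \<le> inverse (fact k) * (\<bar>t\<bar> * R) ^ k" .
  qed
qed

lemma stationary_zero_propagates:
  assumes "generator Q" "stationary Q \<pi>" and "\<pi> b = 0" "a \<noteq> b" "Q a b > 0"
  shows "\<pi> a = 0"
proof -
  have nonneg: "0 \<le> \<pi> c * Q c b" if "c \<noteq> b" for c
    using assms(1,2) that by (simp add: generator_def stationary_def)
  have "(\<Sum>c\<in>UNIV - {b}. \<pi> c * Q c b) = (\<Sum>c\<in>UNIV. \<pi> c * Q c b)"
    using \<open>\<pi> b = 0\<close> by (subst sum.remove[of UNIV b]) auto
  also have "\<dots> = 0"
    using assms(2) by (simp add: stationary_def)
  finally have "\<pi> a * Q a b = 0"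
    using \<open>a \<noteq> b\<close> by (subst (asm) sum_nonneg_eq_0_iff) (auto intro: nonneg)
  then show ?thesis
    using \<open>Q a b > 0\<close> by simp
qed

lemma stationary_pos:
  assumes "generator Q" "irreducible_gen Q" "stationary Q \<pi>"
  shows "\<pi> x > 0"
proof (rule ccontr)
  assume "\<not> \<pi> x > 0"
  then have "\<pi> x = 0"
    using assms(3) by (simp add: stationary_def leD order.antisym)
  have "\<pi> a = 0" for a
  proof -
    have "(a, x) \<in> {(a, b). a \<noteq> b \<and> Q a b > 0}\<^sup>*"
      using assms(2) by (simp add: irreducible_gen_def)
    then show ?thesis
    proof (induction rule: converse_rtrancl_induct)
      case base
      then show ?case by (rule \<open>\<pi> x = 0\<close>)
    next
      case (step a b)
      then show ?case using stationary_zero_propagates[OF assms(1,3)] by auto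
    qed
  qed
  then show False
    using assms(3) by (simp add: stationary_def)
qed

lemma mpow_reversed_gen:
  assumes "\<And>x. \<pi> x > 0"
  shows "\<pi> a * mpow (reversed_gen Q \<pi>) k a b = \<pi> b * mpow Q k b a"
proof (induction k arbitrary: b)
  case 0
  then show ?case by simp
next
  case (Suc k)
  have "\<pi> a * mpow (reversed_gen Q \<pi>) (Suc k) a b
      = (\<Sum>z\<in>UNIV. (\<pi> a * mpow (reversed_gen Q \<pi>) k a z) * reversed_gen Q \<pi> z b)"
    by (simp add: sum_distrib_left mult.assoc)
  also have "\<dots> = (\<Sum>z\<in>UNIV. \<pi> z * mpow Q k z a * (\<pi> b * Q b z / \<pi> z))"
    by (simp add: Suc.IH reversed_gen_def)
  also have "\<dots> = (\<Sum>z\<in>UNIV. \<pi> b * (Q b z * mpow Q k z a))"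
    using assms by (intro sum.cong refl) (simp add: field_simps less_imp_neq[OF assms, symmetric])
  also have "\<dots> = \<pi> b * mpow Q (Suc k) b a"
    by (simp only: mpow_Suc_left sum_distrib_left)
  finally show ?case .
qed

lemma trans_fun_reversed_gen:
  assumes "\<And>x. \<pi> x > 0"
  shows "\<pi> a * trans_fun (reversed_gen Q \<pi>) t a b = \<pi> b * trans_fun Q t b a"
proof -
  have "\<pi> a * trans_fun (reversed_gen Q \<pi>) t a b
      = (\<Sum>k. \<pi> a * (t ^ k / fact k * mpow (reversed_gen Q \<pi>) k a b))"
    unfolding trans_fun_def by (rule suminf_mult[symmetric, OF summable_trans_fun])
  also have "\<dots> = (\<Sum>k. \<pi> b * (t ^ k / fact k * mpow Q k b a))"
    using mpow_reversed_gen[of \<pi>, OF assms] by (intro suminf_cong) (metis mult.left_commute)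
  also have "\<dots> = \<pi> b * trans_fun Q t b a"
    unfolding trans_fun_def by (rule suminf_mult[OF summable_trans_fun])
  finally show ?thesis .
qed

lemma ctmc_prob_space: "ctmc Q y M X \<Longrightarrow> prob_space M"
  by (simp add: ctmc_def)

lemma ctmc_measurable: "ctmc Q y M X \<Longrightarrow> 0 \<le> t \<Longrightarrow> X t \<in> M \<rightarrow>\<^sub>M count_space UNIV"
  by (simp add: ctmc_def)

lemma ctmc_regular_path: "ctmc Q y M X \<Longrightarrow> \<omega> \<in> space M \<Longrightarrow> regular_path (\<lambda>t. X t \<omega>)"
  by (simp add: ctmc_def)

lemma (in finite_measure) measure_eq_sum_PiE:
  fixes Z :: "nat \<Rightarrow> 'a \<Rightarrow> 's::finite"
  assumes "\<And>i. i \<le> m \<Longrightarrow> Z i \<in> M \<rightarrow>\<^sub>M count_space UNIV"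
  shows "measure M {\<omega>\<in>space M. \<forall>i\<le>m. Z i \<omega> \<in> A i}
       = (\<Sum>x\<in>PiE {..m} A. measure M {\<omega>\<in>space M. \<forall>i\<le>m. Z i \<omega> = x i})"
proof -
  define E where "E x = {\<omega>\<in>space M. \<forall>i\<le>m. Z i \<omega> = x i}" for x
  have union: "{\<omega>\<in>space M. \<forall>i\<le>m. Z i \<omega> \<in> A i} = (\<Union>x\<in>PiE {..m} A. E x)"
  proof safe
    fix \<omega> assume "\<omega> \<in> space M" "\<forall>i\<le>m. Z i \<omega> \<in> A i"
    then show "\<omega> \<in> (\<Union>x\<in>PiE {..m} A. E x)"
      by (intro UN_I[of "\<lambda>i\<in>{..m}. Z i \<omega>"]) (auto simp: E_def)
  qed (auto simp: E_def PiE_iff)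
  have events: "E x \<in> sets M" for x
  proof -
    have "E x = (\<Inter>i\<in>{..m}. Z i -` {x i} \<inter> space M)"
      unfolding E_def by auto
    also have "\<dots> \<in> sets M"
      by (intro sets.finite_INT) (auto intro!: measurable_sets[OF assms])
    finally show ?thesis .
  qed
  have disjoint: "disjoint_family_on E (PiE {..m} A)"
    unfolding disjoint_family_on_def
  proof (intro ballI impI)
    fix x x' assume "x \<in> PiE {..m} A" "x' \<in> PiE {..m} A" "x \<noteq> x'"
    then obtain i where "i \<le> m" "x i \<noteq> x' i"
      by (metis PiE_ext atMost_iff)
    then show "E x \<inter> E x' = {}"
      unfolding E_def by auto
  qed
  show ?thesis
    unfolding union E_def[symmetric]
    by (intro finite_measure_finite_Union finite_PiE disjoint) (auto intro: events)
qed

lemma ctmc_measure_cylinder: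
  fixes Q :: "'s::finite \<Rightarrow> 's \<Rightarrow> real"
  assumes "ctmc Q y M X" and "t 0 = 0" and "\<forall>i<m. t i \<le> t (Suc i)"
  shows "measure M {\<omega>\<in>space M. \<forall>i\<le>m. X (t i) \<omega> \<in> A i}
       = (\<Sum>x\<in>{x\<in>PiE {..m} A. x 0 = y}. \<Prod>i<m. trans_fun Q (t (Suc i) - t i) (x i) (x (Suc i)))"
proof -
  interpret prob_space M
    using assms(1) by (rule ctmc_prob_space)
  have "0 \<le> t i" if "i \<le> m" for i
    using that
  proof (induction i)
    case (Suc i)
    then show ?case using assms(3) by (meson Suc_le_lessD less_imp_le_nat order_trans)
  qed (simp add: assms(2))
  then have "measure M {\<omega>\<in>space M. \<forall>i\<le>m. X (t i) \<omega> \<in> A i}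
      = (\<Sum>x\<in>PiE {..m} A. measure M {\<omega>\<in>space M. \<forall>i\<le>m. X (t i) \<omega> = x i})"
    using assms(1) by (intro measure_eq_sum_PiE ctmc_measurable)
  also have "\<dots> = (\<Sum>x\<in>PiE {..m} A.
      if x 0 = y then \<Prod>i<m. trans_fun Q (t (Suc i) - t i) (x i) (x (Suc i)) else 0)"
  proof (intro sum.cong refl)
    fix x :: "nat \<Rightarrow> 's"
    show "measure M {\<omega>\<in>space M. \<forall>i\<le>m. X (t i) \<omega> = x i}
        = (if x 0 = y then \<Prod>i<m. trans_fun Q (t (Suc i) - t i) (x i) (x (Suc i)) else 0)"
      using assms unfolding ctmc_def by simp
  qed
  also have "\<dots> = (\<Sum>x\<in>{x\<in>PiE {..m} A. x 0 = y}. \<Prod>i<m. trans_fun Q (t (Suc i) - t i) (x i) (x (Suc i)))"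
    by (intro sum.inter_filter[symmetric] finite_PiE) auto
  finally show ?thesis .
qed

lemma ctmc_measure_grid:
  assumes "ctmc Q y M X" and "0 \<le> h"
  shows "measure M {\<omega>\<in>space M. (\<forall>i\<le>m. X (real i * h) \<omega> \<in> A i) \<and> X (real m * h) \<omega> = w}
       = (\<Sum>x\<in>{x\<in>PiE {..m} A. x 0 = y \<and> x m = w}. \<Prod>i<m. trans_fun Q h (x i) (x (Suc i)))"
proof -
  define A' where "A' i = (if i = m then A i \<inter> {w} else A i)" for i
  have "{\<omega>\<in>space M. (\<forall>i\<le>m. X (real i * h) \<omega> \<in> A i) \<and> X (real m * h) \<omega> = w}
      = {\<omega>\<in>space M. \<forall>i\<le>m. X (real i * h) \<omega> \<in> A' i}"
    unfolding A'_def by (auto split: if_splits)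
  moreover have "{x\<in>PiE {..m} A'. x 0 = y} = {x\<in>PiE {..m} A. x 0 = y \<and> x m = w}"
    unfolding A'_def by (auto simp: PiE_iff split: if_splits)
  moreover have "(1 + real i) * h - real i * h = h" for i
    by (simp add: algebra_simps)
  ultimately show ?thesis
    using ctmc_measure_cylinder[OF assms(1), of "\<lambda>i. real i * h" m A'] assms(2)
    by (simp add: mult_right_mono)
qed

lemma bij_betw_reverse_PiE:
  fixes m :: nat
  shows "bij_betw (\<lambda>x. \<lambda>j\<in>{..m}. x (m - j))
     {x\<in>PiE {..m} A. x 0 = a \<and> x m = b} {x\<in>PiE {..m} (\<lambda>j. A (m - j)). x 0 = b \<and> x m = a}"
proof (rule bij_betw_byWitness[where f' = "\<lambda>x. \<lambda>j\<in>{..m}. x (m - j)"])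
  have rev_rev: "(\<lambda>j\<in>{..m}. (\<lambda>j\<in>{..m}. x (m - j)) (m - j)) = x" if "x \<in> extensional {..m}" for x
    using that by (auto simp: fun_eq_iff extensional_def)
  have rev_PiE: "(\<lambda>j\<in>{..m}. x (m - j)) \<in> PiE {..m} C"
    if "x \<in> PiE {..m} B" "\<And>j. j \<le> m \<Longrightarrow> B (m - j) = C j" for x B C
    using that by (auto simp: PiE_iff) (metis atMost_iff diff_le_self)
  show "\<forall>x\<in>{x\<in>PiE {..m} A. x 0 = a \<and> x m = b}.
      (\<lambda>j\<in>{..m}. (\<lambda>j\<in>{..m}. x (m - j)) (m - j)) = x"
    using rev_rev by (auto simp: PiE_iff)
  show "\<forall>x\<in>{x\<in>PiE {..m} (\<lambda>j. A (m - j)). x 0 = b \<and> x m = a}.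
      (\<lambda>j\<in>{..m}. (\<lambda>j\<in>{..m}. x (m - j)) (m - j)) = x"
    using rev_rev by (auto simp: PiE_iff)
  show "(\<lambda>x. \<lambda>j\<in>{..m}. x (m - j)) ` {x\<in>PiE {..m} A. x 0 = a \<and> x m = b}
      \<subseteq> {x\<in>PiE {..m} (\<lambda>j. A (m - j)). x 0 = b \<and> x m = a}"
    using rev_PiE[of _ A] by (auto simp del: restrict_PiE)
  show "(\<lambda>x. \<lambda>j\<in>{..m}. x (m - j)) ` {x\<in>PiE {..m} (\<lambda>j. A (m - j)). x 0 = b \<and> x m = a}
      \<subseteq> {x\<in>PiE {..m} A. x 0 = a \<and> x m = b}"
    using rev_PiE[of _ "\<lambda>j. A (m - j)" A] by (auto simp del: restrict_PiE)
qed

lemma detailed_balance_prod: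
  assumes "\<And>a b. \<pi> a * P' a b = \<pi> b * P b a"
  shows "\<pi> (x m) * (\<Prod>i<m. P' (x (Suc i)) (x i)) = \<pi> (x 0) * (\<Prod>i<m. P (x i) (x (Suc i)))"
proof (induction m)
  case (Suc m)
  have "\<pi> (x (Suc m)) * (\<Prod>i<Suc m. P' (x (Suc i)) (x i))
      = (\<pi> (x (Suc m)) * P' (x (Suc m)) (x m)) * (\<Prod>i<m. P' (x (Suc i)) (x i))"
    by (simp add: mult_ac)
  also have "\<dots> = P (x m) (x (Suc m)) * (\<pi> (x m) * (\<Prod>i<m. P' (x (Suc i)) (x i)))"
    by (simp add: assms mult_ac)
  finally show ?case
    by (simp add: Suc mult_ac)
qed simp

lemma ctmc_grid_reversal:
  fixes Q :: "'s::finite \<Rightarrow> 's \<Rightarrow> real"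
  assumes pos: "\<And>x. \<pi> x > 0" and X: "ctmc Q y M X" and Y: "ctmc (reversed_gen Q \<pi>) w N Y"
    and "0 \<le> h"
  shows "\<pi> y * measure M {\<omega>\<in>space M. (\<forall>i\<le>m. X (real i * h) \<omega> \<in> A i) \<and> X (real m * h) \<omega> = w}
       = \<pi> w * measure N {\<omega>\<in>space N. (\<forall>j\<le>m. Y (real j * h) \<omega> \<in> A (m - j)) \<and> Y (real m * h) \<omega> = y}"
proof -
  define P where "P = trans_fun Q h"
  define P' where "P' = trans_fun (reversed_gen Q \<pi>) h"
  define rev where "rev x = (\<lambda>j\<in>{..m}. x (m - j))" for x :: "nat \<Rightarrow> 's"
  define S where "S = {x\<in>PiE {..m} A. x 0 = y \<and> x m = w}"
  have balance: "\<pi> a * P' a b = \<pi> b * P b a" for a b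
    unfolding P_def P'_def by (rule trans_fun_reversed_gen[OF pos])
  have rev_prod: "(\<Prod>j<m. P' (rev x j) (rev x (Suc j))) = (\<Prod>i<m. P' (x (Suc i)) (x i))" for x
  proof -
    have "(\<Prod>j<m. P' (rev x j) (rev x (Suc j))) = (\<Prod>j<m. P' (x (Suc (m - Suc j))) (x (m - Suc j)))"
      by (intro prod.cong) (auto simp: rev_def Suc_diff_Suc)
    also have "\<dots> = (\<Prod>i<m. P' (x (Suc i)) (x i))"
      by (rule prod.nat_diff_reindex)
    finally show ?thesis .
  qed
  have reindex: "(\<Sum>x\<in>S. \<Prod>j<m. P' (rev x j) (rev x (Suc j)))
      = (\<Sum>x\<in>{x\<in>PiE {..m} (\<lambda>j. A (m - j)). x 0 = w \<and> x m = y}. \<Prod>j<m. P' (x j) (x (Suc j)))"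
    unfolding S_def rev_def by (rule sum.reindex_bij_betw[OF bij_betw_reverse_PiE])
  have "\<pi> y * measure M {\<omega>\<in>space M. (\<forall>i\<le>m. X (real i * h) \<omega> \<in> A i) \<and> X (real m * h) \<omega> = w}
      = (\<Sum>x\<in>S. \<pi> (x 0) * (\<Prod>i<m. P (x i) (x (Suc i))))"
    unfolding ctmc_measure_grid[OF X \<open>0 \<le> h\<close>] S_def P_def by (simp add: sum_distrib_left)
  also have "\<dots> = (\<Sum>x\<in>S. \<pi> (x m) * (\<Prod>i<m. P' (x (Suc i)) (x i)))"
    by (intro sum.cong refl) (rule detailed_balance_prod[OF balance, symmetric])
  also have "\<dots> = \<pi> w * (\<Sum>x\<in>S. \<Prod>j<m. P' (rev x j) (rev x (Suc j)))"
    unfolding rev_prod sum_distrib_left S_def by (intro sum.cong) auto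
  finally show ?thesis
    unfolding ctmc_measure_grid[OF Y \<open>0 \<le> h\<close>] P'_def[symmetric] reindex[symmetric] .
qed

lemma ceiling_interval_iff:
  fixes h t :: real
  assumes "0 < h" "0 < t"
  shows "(real k - 1) * h < t \<and> t \<le> real k * h \<longleftrightarrow> k = nat \<lceil>t / h\<rceil>"
proof -
  have "1 \<le> \<lceil>t / h\<rceil>"
    using assms by (simp add: one_le_ceiling zero_less_divide_iff)
  moreover have "(real k - 1) * h < t \<and> t \<le> real k * h \<longleftrightarrow> real k - 1 < t / h \<and> t / h \<le> real k"
    using assms by (simp add: field_simps)
  moreover have "\<dots> \<longleftrightarrow> \<lceil>t / h\<rceil> = int k"
    by (subst ceiling_eq_iff) auto
  ultimately show ?thesis
    by linarith
qed

lemma sum_indicator_Ioc_grid: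
  fixes h t :: real and a :: "nat \<Rightarrow> real"
  assumes "0 < h"
  shows "(\<Sum>k\<in>{1..m}. indicator {(real k - 1) * h <.. real k * h} t * a k)
       = (if 0 < t \<and> t \<le> real m * h then a (nat \<lceil>t / h\<rceil>) else 0)"
proof (cases "0 < t \<and> t \<le> real m * h")
  case True
  define k0 where "k0 = nat \<lceil>t / h\<rceil>"
  have "1 \<le> \<lceil>t / h\<rceil>" "\<lceil>t / h\<rceil> \<le> int m"
    using assms True by (simp_all add: one_le_ceiling zero_less_divide_iff ceiling_le_iff field_simps)
  then have "k0 \<in> {1..m}"
    unfolding k0_def by (auto simp: le_nat_iff nat_le_iff)
  moreover have "indicator {(real k - 1) * h <.. real k * h} t * a k = (if k = k0 then a k else 0)" for k
    using ceiling_interval_iff[OF assms, of t k] True unfolding k0_def by (simp add: indicator_def)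
  ultimately show ?thesis
    using True by (simp add: k0_def sum.delta')
next
  case False
  have "t \<notin> {(real k - 1) * h <.. real k * h}" if "k \<in> {1..m}" for k
  proof
    assume "t \<in> {(real k - 1) * h <.. real k * h}"
    moreover have "0 \<le> (real k - 1) * h" "real k * h \<le> real m * h"
      using that assms by auto
    ultimately show False
      using False by auto
  qed
  then have "(\<Sum>k\<in>{1..m}. indicator {(real k - 1) * h <.. real k * h} t * a k) = 0"
    by (intro sum.neutral) simp
  then show ?thesis
    unfolding if_not_P[OF False] .
qed

lemma integral_sum_indicator_Ioc_grid:
  fixes h :: real and a :: "nat \<Rightarrow> real"
  assumes "0 \<le> h"
  shows "integral\<^sup>L lborel (\<lambda>t. \<Sum>k\<in>{1..m}. indicator {(real k - 1) * h <.. real k * h} t * a k)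
       = (\<Sum>k\<in>{1..m}. h * a k)"
proof -
  have finite_Ioc: "emeasure lborel {u <.. v} < \<top>" for u v :: real
    by (cases "u \<le> v") auto
  have "(real k - 1) * h \<le> real k * h" for k
    using assms by (simp add: algebra_simps)
  then show ?thesis
    by (subst Bochner_Integration.integral_sum)
      (auto intro!: integrable_mult_left integrable_real_indicator finite_Ioc simp: algebra_simps)
qed

lemma regular_path_ceiling_grid_eventually:
  assumes "regular_path w" "0 \<le> t" and h: "h \<longlonglongrightarrow> 0" "\<And>n. 0 < h n"
  shows "eventually (\<lambda>n. w (real (nat \<lceil>t / h n\<rceil>) * h n) = w t) sequentially"
proof -
  obtain \<delta> where "\<delta> > 0" and const: "\<And>u. t \<le> u \<Longrightarrow> u < t + \<delta> \<Longrightarrow> w u = w t"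
    using assms(1,2) unfolding regular_path_def by blast
  have "eventually (\<lambda>n. h n < \<delta>) sequentially"
    using h(1) \<open>\<delta> > 0\<close> by (rule order_tendstoD)
  then show ?thesis
  proof (rule eventually_mono)
    fix n assume "h n < \<delta>"
    have "0 \<le> t / h n"
      using assms(2) h(2)[of n] by simp
    then have "0 \<le> \<lceil>t / h n\<rceil>"
      by simp
    then have r: "real (nat \<lceil>t / h n\<rceil>) * h n = of_int \<lceil>t / h n\<rceil> * h n"
      by simp
    have "of_int \<lceil>t / h n\<rceil> - 1 < t / h n"
      by (simp add: ceiling_correct)
    then have "of_int \<lceil>t / h n\<rceil> * h n < t + h n"
      using h(2)[of n] by (simp add: field_simps)
    moreover have "t \<le> of_int \<lceil>t / h n\<rceil> * h n"
      using h(2)[of n] by (subst pos_divide_le_eq[symmetric]) simp_all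
    ultimately show "w (real (nat \<lceil>t / h n\<rceil>) * h n) = w t"
      unfolding r using \<open>h n < \<delta>\<close> by (intro const) auto
  qed
qed

lemma occupation_step_eq:
  fixes w :: "real \<Rightarrow> 's"
  assumes "0 < s"
  shows "(\<Sum>k\<in>{1..2^n}. indicator {(real k - 1) * (s / 2^n) <.. real k * (s / 2^n)} t
            * (if w (real k * (s / 2^n)) = x then 1 else 0 :: real))
       = (if 0 < t \<and> t \<le> s then if w (real (nat \<lceil>t / (s / 2^n)\<rceil>) * (s / 2^n)) = x then 1 else 0
          else 0)"
  using assms by (subst sum_indicator_Ioc_grid) simp_all

lemma occupation_step_tendsto:
  fixes w :: "real \<Rightarrow> 's"
  assumes w: "regular_path w" and "0 < s"
  shows "(\<lambda>n. \<Sum>k\<in>{1..2^n}. indicator {(real k - 1) * (s / 2^n) <.. real k * (s / 2^n)} t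
            * (if w (real k * (s / 2^n)) = x then 1 else 0 :: real))
           \<longlonglongrightarrow> indicator {t. 0 < t \<and> t \<le> s \<and> w t = x} t"
proof (cases "0 < t \<and> t \<le> s")
  case True
  have "(\<lambda>n. s / 2^n) \<longlonglongrightarrow> 0" "\<And>n. 0 < s / 2^n"
    using \<open>0 < s\<close> by (simp_all add: LIMSEQ_divide_realpow_zero)
  then have "eventually (\<lambda>n. w (real (nat \<lceil>t / (s / 2^n)\<rceil>) * (s / 2^n)) = w t) sequentially"
    using True by (intro regular_path_ceiling_grid_eventually[OF w]) simp_all
  then show ?thesis
    unfolding occupation_step_eq[OF \<open>0 < s\<close>]
    by (rule tendsto_eventually[OF eventually_mono]) (use True in \<open>simp add: indicator_def\<close>)
next
  case False
  then have "t \<notin> {t. 0 < t \<and> t \<le> s \<and> w t = x}"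
    by auto
  then show ?thesis
    unfolding occupation_step_eq[OF \<open>0 < s\<close>] if_not_P[OF False] by simp
qed

lemma right_riemann_sum_tendsto_occupation:
  fixes w :: "real \<Rightarrow> 's"
  assumes w: "regular_path w" and "0 < s"
  shows "(\<lambda>n. \<Sum>k\<in>{1..2^n}. s / 2^n * (if w (real k * (s / 2^n)) = x then 1 else 0))
           \<longlonglongrightarrow> measure lborel {t. 0 < t \<and> t < s \<and> w t = x}"
proof -
  define g where "g n t = (\<Sum>k\<in>{1..2^n}. indicator {(real k - 1) * (s / 2^n) <.. real k * (s / 2^n)} t
      * (if w (real k * (s / 2^n)) = x then 1 else 0 :: real))" for n t
  define E where "E = {t. 0 < t \<and> t \<le> s \<and> w t = x}"
  have g_tendsto: "(\<lambda>n. g n t) \<longlonglongrightarrow> indicator E t" for t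
    unfolding g_def E_def by (rule occupation_step_tendsto[OF w \<open>0 < s\<close>])
  have g_measurable: "g n \<in> borel_measurable lborel" for n
    unfolding g_def by measurable
  then have E_measurable: "(indicator E :: real \<Rightarrow> real) \<in> borel_measurable lborel"
    using g_tendsto by (rule borel_measurable_LIMSEQ_real[rotated])
  have "(\<lambda>n. integral\<^sup>L lborel (g n)) \<longlonglongrightarrow> integral\<^sup>L lborel (indicator E)"
  proof (rule integral_dominated_convergence)
    show "integrable lborel (indicator {0..s} :: real \<Rightarrow> real)"
      using \<open>0 < s\<close> by (intro integrable_real_indicator) auto
    show "AE t in lborel. norm (g n t) \<le> indicator {0..s} t" for n
      unfolding g_def occupation_step_eq[OF \<open>0 < s\<close>] by (simp add: indicator_def)
  qed (use g_measurable g_tendsto E_measurable in auto)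
  moreover have "integral\<^sup>L lborel (g n)
      = (\<Sum>k\<in>{1..2^n}. s / 2^n * (if w (real k * (s / 2^n)) = x then 1 else 0))" for n
    unfolding g_def using \<open>0 < s\<close> by (subst integral_sum_indicator_Ioc_grid) simp_all
  moreover have "measure lborel E = measure lborel {t. 0 < t \<and> t < s \<and> w t = x}"
  proof (rule measure_eq_AE)
    show "AE t in lborel. t \<in> E \<longleftrightarrow> t \<in> {t. 0 < t \<and> t < s \<and> w t = x}"
      using AE_lborel_singleton[of s] by eventually_elim (auto simp: E_def)
    show "E \<in> sets lborel"
      using E_measurable by (simp add: borel_measurable_indicator_iff)
    moreover have "{t. 0 < t \<and> t < s \<and> w t = x} = E - {s}"
      unfolding E_def by auto
    ultimately show "{t. 0 < t \<and> t < s \<and> w t = x} \<in> sets lborel"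
      by auto
  qed
  ultimately show ?thesis
    by simp
qed

definition dyadic_points :: "real \<Rightarrow> real set" where
  "dyadic_points s = {t. \<exists>n k. k \<le> (2::nat) ^ n \<and> t = real k * (s / 2 ^ n)}"

text \<open>Both endpoints are included so that the sum is invariant under the reflection
  \<open>t \<mapsto> s - t\<close> of \<open>[0, s]\<close>.\<close>

definition occ_riemann :: "real \<Rightarrow> (real \<Rightarrow> 's) \<Rightarrow> nat \<Rightarrow> 's \<Rightarrow> real" where
  "occ_riemann s p n x = (\<Sum>k\<le>2^n. s / 2^n * (if p (real k * (s / 2^n)) = x then 1 else 0))"

definition occ_limit :: "real \<Rightarrow> (real \<Rightarrow> 's) \<Rightarrow> 's \<Rightarrow> real" where
  "occ_limit s p x = lim (\<lambda>n. occ_riemann s p n x)"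

lemma dyadic_pointsI: "k \<le> 2 ^ n \<Longrightarrow> real k * (s / 2 ^ n) \<in> dyadic_points s"
  unfolding dyadic_points_def by blast

lemma dyadic_points_bounds:
  assumes "0 \<le> s" "t \<in> dyadic_points s"
  shows "0 \<le> t" "t \<le> s"
proof -
  obtain n k where "k \<le> (2::nat) ^ n" "t = real k * (s / 2 ^ n)"
    using assms(2) unfolding dyadic_points_def by blast
  moreover have "real k * (s / 2 ^ n) \<le> 2 ^ n * (s / 2 ^ n)" if "k \<le> (2::nat) ^ n" for k n
    using that assms(1) by (intro mult_right_mono) (simp_all add: numeral_power_le_of_nat_cancel_iff)
  ultimately show "0 \<le> t" "t \<le> s"
    using assms(1) by auto
qed

lemma dyadic_refine:
  assumes "k \<le> (2::nat) ^ n" "n \<le> N"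
  shows "\<exists>k'\<le>(2::nat) ^ N. real k * (s / 2 ^ n) = real k' * (s / 2 ^ N)"
proof (intro exI conjI)
  have N: "(2::nat) ^ N = 2 ^ n * 2 ^ (N - n)"
    using assms(2) by (simp flip: power_add)
  then show "k * 2 ^ (N - n) \<le> (2::nat) ^ N"
    using assms(1) by simp
  show "real k * (s / 2 ^ n) = real (k * 2 ^ (N - n)) * (s / 2 ^ N)"
    using arg_cong[OF N, of real] by (simp add: field_simps)
qed

lemma dyadic_points_common_grid:
  assumes "finite J" "J \<subseteq> dyadic_points s"
  shows "\<exists>N. \<forall>t\<in>J. \<exists>k\<le>(2::nat) ^ N. t = real k * (s / 2 ^ N)"
proof -
  have "\<forall>t\<in>J. \<exists>n k. k \<le> (2::nat) ^ n \<and> t = real k * (s / 2 ^ n)"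
    using assms(2) unfolding dyadic_points_def by blast
  then have "\<exists>n. \<forall>t\<in>J. \<exists>k. k \<le> (2::nat) ^ n t \<and> t = real k * (s / 2 ^ n t)"
    by (rule bchoice)
  then obtain n where n: "\<forall>t\<in>J. \<exists>k. k \<le> (2::nat) ^ n t \<and> t = real k * (s / 2 ^ n t)"
    ..
  define N where "N = Max (insert 0 (n ` J))"
  have "\<exists>k\<le>(2::nat) ^ N. t = real k * (s / 2 ^ N)" if "t \<in> J" for t
  proof -
    obtain k where k: "k \<le> (2::nat) ^ n t" "t = real k * (s / 2 ^ n t)"
      using n \<open>t \<in> J\<close> by blast
    have "n t \<le> N"
      unfolding N_def using assms(1) \<open>t \<in> J\<close> by simp
    then obtain k' where "k' \<le> (2::nat) ^ N" "real k * (s / 2 ^ n t) = real k' * (s / 2 ^ N)"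
      using dyadic_refine[OF k(1)] by blast
    then show ?thesis
      using k(2) by metis
  qed
  then show ?thesis
    by blast
qed

lemma occ_riemann_cong:
  assumes "\<And>t. t \<in> dyadic_points s \<Longrightarrow> p t = p' t"
  shows "occ_riemann s p n x = occ_riemann s p' n x"
  unfolding occ_riemann_def using assms dyadic_pointsI by (intro sum.cong) auto

lemma occ_riemann_reflect: "occ_riemann s (\<lambda>t. p (s - t)) n x = occ_riemann s p n x"
proof -
  have "s - real k * (s / 2^n) = real (2^n - k) * (s / 2^n)" if "k \<le> 2^n" for k
    using that by (simp add: of_nat_diff field_simps)
  then have "occ_riemann s (\<lambda>t. p (s - t)) n x
      = (\<Sum>k\<in>{0..2^n}. s / 2^n * (if p (real (2^n + 0 - k) * (s / 2^n)) = x then 1 else 0))"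
    unfolding occ_riemann_def atMost_atLeast0 by (intro sum.cong) auto
  also have "\<dots> = occ_riemann s p n x"
    unfolding occ_riemann_def atMost_atLeast0 by (rule sum.atLeastAtMost_rev[symmetric])
  finally show ?thesis .
qed

lemma occ_riemann_tendsto:
  assumes "regular_path w" "0 \<le> s"
  shows "(\<lambda>n. occ_riemann s w n x) \<longlonglongrightarrow> measure lborel {t. 0 < t \<and> t < s \<and> w t = x}"
proof (cases "s = 0")
  case True
  then have empty: "{t. 0 < t \<and> t < s \<and> w t = x} = {}"
    by auto
  show ?thesis
    unfolding empty using True by (simp add: occ_riemann_def)
next
  case False
  define f where "f n k = s / 2^n * (if w (real k * (s / 2^n)) = x then 1 else 0 :: real)" for n k
  have "occ_riemann s w n x = s / 2^n * (if w 0 = x then 1 else 0) + (\<Sum>k\<in>{1..2^n}. f n k)" for n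
    unfolding occ_riemann_def f_def atMost_atLeast0 by (simp add: sum.atLeast_Suc_atMost)
  moreover have "(\<lambda>n. s / 2^n * (if w 0 = x then 1 else 0)) \<longlonglongrightarrow> 0"
    by (intro tendsto_mult_left_zero LIMSEQ_divide_realpow_zero) simp
  moreover have "(\<lambda>n. \<Sum>k\<in>{1..2^n}. f n k) \<longlonglongrightarrow> measure lborel {t. 0 < t \<and> t < s \<and> w t = x}"
    unfolding f_def using assms False by (intro right_riemann_sum_tendsto_occupation) auto
  ultimately show ?thesis
    using tendsto_add by fastforce
qed

lemma occ_eq_occ_limit:
  assumes "regular_path (\<lambda>t. X t \<omega>)" "0 \<le> s"
  shows "occ s X \<omega> = occ_limit s (\<lambda>t\<in>dyadic_points s. X t \<omega>)"
proof
  fix x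
  have "(\<lambda>n. occ_riemann s (\<lambda>t\<in>dyadic_points s. X t \<omega>) n x) \<longlonglongrightarrow> occ s X \<omega> x"
    unfolding occ_def using occ_riemann_tendsto[OF assms] by (subst occ_riemann_cong) auto
  then show "occ s X \<omega> x = occ_limit s (\<lambda>t\<in>dyadic_points s. X t \<omega>) x"
    unfolding occ_limit_def by (rule limI[symmetric])
qed

lemma occ_eq_occ_limit_reflected:
  assumes "regular_path (\<lambda>t. X t \<omega>)" "0 \<le> s"
  shows "occ s X \<omega> = occ_limit s (\<lambda>t\<in>dyadic_points s. X (s - t) \<omega>)"
proof
  fix x
  have "(\<lambda>n. occ_riemann s (\<lambda>t\<in>dyadic_points s. X (s - t) \<omega>) n x) \<longlonglongrightarrow> occ s X \<omega> x"
    unfolding occ_def using occ_riemann_tendsto[OF assms]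
    by (subst occ_riemann_cong[where p' = "\<lambda>t. X (s - t) \<omega>"])
      (auto simp: occ_riemann_reflect[of s "\<lambda>t. X t \<omega>"])
  then show "occ s X \<omega> x = occ_limit s (\<lambda>t\<in>dyadic_points s. X (s - t) \<omega>) x"
    unfolding occ_limit_def by (rule limI[symmetric])
qed

lemma measurable_occ_limit:
  "occ_limit s \<in> PiM (dyadic_points s) (\<lambda>_. count_space (UNIV::'s set)) \<rightarrow>\<^sub>M PiM UNIV (\<lambda>_::'s. borel)"
proof (rule measurable_PiM_single')
  fix x :: 's
  have "(\<lambda>p. p (real k * (s / 2^n))) \<in> PiM (dyadic_points s) (\<lambda>_. count_space UNIV) \<rightarrow>\<^sub>M count_space UNIV"
    if "k \<le> 2^n" for k n
    using that by (intro measurable_component_singleton dyadic_pointsI)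
  then have "(\<lambda>p. occ_riemann s p n x) \<in> borel_measurable (PiM (dyadic_points s) (\<lambda>_. count_space UNIV))" for n
    unfolding occ_riemann_def by measurable
  then show "(\<lambda>p. occ_limit s p x) \<in> borel_measurable (PiM (dyadic_points s) (\<lambda>_. count_space UNIV))"
    unfolding occ_limit_def by (rule borel_measurable_lim_metric)
qed simp

lemma restrict_in_cylinder_iff:
  assumes "J \<subseteq> D" and grid: "\<forall>t\<in>J. \<exists>k\<le>m. t = real k * h"
  shows "(\<lambda>t\<in>D. g t) \<in> prod_emb D (\<lambda>_. count_space UNIV) J (PiE J A)
     \<longleftrightarrow> (\<forall>i\<le>m. g (real i * h) \<in> (if real i * h \<in> J then A (real i * h) else UNIV))"
proof -
  have "(\<lambda>t\<in>D. g t) \<in> prod_emb D (\<lambda>_. count_space UNIV) J (PiE J A) \<longleftrightarrow> (\<forall>t\<in>J. g t \<in> A t)"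
    using assms(1) by (simp add: prod_emb_iff restrict_PiE_iff Int_absorb1 Pi_iff)
  also have "\<dots> \<longleftrightarrow> (\<forall>i\<le>m. g (real i * h) \<in> (if real i * h \<in> J then A (real i * h) else UNIV))"
  proof
    assume on_grid: "\<forall>i\<le>m. g (real i * h) \<in> (if real i * h \<in> J then A (real i * h) else UNIV)"
    show "\<forall>t\<in>J. g t \<in> A t"
    proof
      fix t assume "t \<in> J"
      then obtain k where "k \<le> m" "t = real k * h"
        using grid by blast
      then show "g t \<in> A t"
        using on_grid[rule_format, OF \<open>k \<le> m\<close>] \<open>t \<in> J\<close> by simp
    qed
  qed simp
  finally show ?thesis .
qed

lemma emeasure_scale_distr_density_indicator:
  assumes "finite_measure M" "p \<in> M \<rightarrow>\<^sub>M N" "{\<omega>\<in>space M. P \<omega>} \<in> sets M" "C \<in> sets N" "0 \<le> c"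
  shows "emeasure (scale_measure (ennreal c) (distr (density M (indicator {\<omega>\<in>space M. P \<omega>})) N p)) C
       = ennreal (c * measure M {\<omega>\<in>space M. p \<omega> \<in> C \<and> P \<omega>})"
proof -
  interpret finite_measure M
    by (rule assms(1))
  have "p -` C \<inter> space M \<in> sets M"
    using measurable_sets[OF assms(2,4)] .
  moreover have "{\<omega>\<in>space M. P \<omega>} \<inter> (p -` C \<inter> space M) = {\<omega>\<in>space M. p \<omega> \<in> C \<and> P \<omega>}"
    by blast
  ultimately show ?thesis
    using assms(2-5)
    by (simp add: emeasure_distr emeasure_restricted emeasure_eq_measure ennreal_mult)
qed

lemma measure_restricted_eq_PiM:
  fixes p :: "'a \<Rightarrow> 'i \<Rightarrow> 's" and q :: "'b \<Rightarrow> 'i \<Rightarrow> 's"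
  assumes M: "finite_measure M" and N: "finite_measure N"
    and p: "p \<in> M \<rightarrow>\<^sub>M PiM I (\<lambda>_. count_space UNIV)" and q: "q \<in> N \<rightarrow>\<^sub>M PiM I (\<lambda>_. count_space UNIV)"
    and P: "{\<omega>\<in>space M. P \<omega>} \<in> sets M" and P': "{\<omega>\<in>space N. P' \<omega>} \<in> sets N"
    and "0 \<le> a" "0 \<le> b"
    and cylinders: "\<And>J A. finite J \<Longrightarrow> J \<subseteq> I \<Longrightarrow>
      a * measure M {\<omega>\<in>space M. p \<omega> \<in> prod_emb I (\<lambda>_. count_space UNIV) J (PiE J A) \<and> P \<omega>}
      = b * measure N {\<omega>\<in>space N. q \<omega> \<in> prod_emb I (\<lambda>_. count_space UNIV) J (PiE J A) \<and> P' \<omega>}"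
    and C: "C \<in> sets (PiM I (\<lambda>_. count_space UNIV))"
  shows "a * measure M {\<omega>\<in>space M. p \<omega> \<in> C \<and> P \<omega>} = b * measure N {\<omega>\<in>space N. q \<omega> \<in> C \<and> P' \<omega>}"
proof -
  define D where "D = PiM I (\<lambda>_. count_space (UNIV::'s set))"
  define \<mu> where "\<mu> = scale_measure a (distr (density M (indicator {\<omega>\<in>space M. P \<omega>})) D p)"
  define \<nu> where "\<nu> = scale_measure b (distr (density N (indicator {\<omega>\<in>space N. P' \<omega>})) D q)"
  have \<mu>: "emeasure \<mu> C' = a * measure M {\<omega>\<in>space M. p \<omega> \<in> C' \<and> P \<omega>}" if "C' \<in> sets D" for C'
    using emeasure_scale_distr_density_indicator[OF M p[folded D_def] P that \<open>0 \<le> a\<close>] \<open>0 \<le> a\<close>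
    unfolding \<mu>_def by simp
  have \<nu>: "emeasure \<nu> C' = b * measure N {\<omega>\<in>space N. q \<omega> \<in> C' \<and> P' \<omega>}" if "C' \<in> sets D" for C'
    using emeasure_scale_distr_density_indicator[OF N q[folded D_def] P' that \<open>0 \<le> b\<close>] \<open>0 \<le> b\<close>
    unfolding \<nu>_def by simp
  have "\<mu> = \<nu>"
  proof (rule measure_eqI_PiM_infinite)
    show "sets \<mu> = PiM I (\<lambda>_. count_space UNIV)" "sets \<nu> = PiM I (\<lambda>_. count_space UNIV)"
      by (simp_all add: \<mu>_def \<nu>_def D_def)
    show "finite_measure \<mu>"
      using \<mu>[of "space D"] by (intro finite_measureI) (simp add: \<mu>_def space_scale_measure)
  next
    fix J A assume J: "finite J" "J \<subseteq> I"
    then have "prod_emb I (\<lambda>_. count_space UNIV) J (PiE J A) \<in> sets D"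
      unfolding D_def by (intro sets_PiM_I) auto
    then show "emeasure \<mu> (prod_emb I (\<lambda>_. count_space UNIV) J (PiE J A))
        = emeasure \<nu> (prod_emb I (\<lambda>_. count_space UNIV) J (PiE J A))"
      by (simp only: \<mu> \<nu> cylinders[OF J])
  qed
  then have "emeasure \<mu> C = emeasure \<nu> C"
    by simp
  moreover have "C \<in> sets D"
    using C unfolding D_def .
  ultimately show ?thesis
    using \<open>0 \<le> a\<close> \<open>0 \<le> b\<close> by (simp add: \<mu> \<nu> ennreal_inj)
qed

lemma ctmc_measurable_samples:
  assumes "ctmc Q y M X" "\<And>t. t \<in> D \<Longrightarrow> 0 \<le> \<tau> t"
  shows "(\<lambda>\<omega>. \<lambda>t\<in>D. X (\<tau> t) \<omega>) \<in> M \<rightarrow>\<^sub>M PiM D (\<lambda>_. count_space UNIV)"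
  using assms by (intro measurable_restrict ctmc_measurable)

lemma ctmc_cylinder_reversal:
  fixes Q :: "'s::finite \<Rightarrow> 's \<Rightarrow> real" and A :: "real \<Rightarrow> 's set"
  assumes pos: "\<And>x. \<pi> x > 0" and X: "ctmc Q y M X" and Y: "ctmc (reversed_gen Q \<pi>) w N Y"
    and "0 \<le> s" and J: "finite J" "J \<subseteq> dyadic_points s"
  defines "C \<equiv> prod_emb (dyadic_points s) (\<lambda>_. count_space UNIV) J (PiE J A)"
  shows "\<pi> y * measure M {\<omega>\<in>space M. (\<lambda>t\<in>dyadic_points s. X t \<omega>) \<in> C \<and> X s \<omega> = w}
       = \<pi> w * measure N {\<omega>\<in>space N. (\<lambda>t\<in>dyadic_points s. Y (s - t) \<omega>) \<in> C \<and> Y s \<omega> = y}"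
proof -
  obtain n where n: "\<forall>t\<in>J. \<exists>k\<le>(2::nat) ^ n. t = real k * (s / 2 ^ n)"
    using dyadic_points_common_grid[OF J] by blast
  define m where "m = (2::nat) ^ n"
  define h where "h = s / 2 ^ n"
  have grid: "\<forall>t\<in>J. \<exists>k\<le>m. t = real k * h"
    using n unfolding m_def h_def .
  have "real m * h = s" "0 \<le> h"
    using \<open>0 \<le> s\<close> unfolding m_def h_def by simp_all
  define A' where "A' i = (if real i * h \<in> J then A (real i * h) else UNIV)" for i
  have reflect: "s - real i * h = real (m - i) * h" if "i \<le> m" for i
    using that \<open>real m * h = s\<close> by (simp add: of_nat_diff algebra_simps)
  have "{\<omega>\<in>space M. (\<lambda>t\<in>dyadic_points s. X t \<omega>) \<in> C \<and> X s \<omega> = w}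
      = {\<omega>\<in>space M. (\<forall>i\<le>m. X (real i * h) \<omega> \<in> A' i) \<and> X (real m * h) \<omega> = w}"
    unfolding C_def A'_def restrict_in_cylinder_iff[OF J(2) grid] \<open>real m * h = s\<close> ..
  moreover have "(\<lambda>t\<in>dyadic_points s. Y (s - t) \<omega>) \<in> C \<longleftrightarrow> (\<forall>j\<le>m. Y (real j * h) \<omega> \<in> A' (m - j))" for \<omega>
  proof -
    have "(\<lambda>t\<in>dyadic_points s. Y (s - t) \<omega>) \<in> C \<longleftrightarrow> (\<forall>i\<le>m. Y (real (m - i) * h) \<omega> \<in> A' i)"
      unfolding C_def A'_def restrict_in_cylinder_iff[OF J(2) grid] using reflect by auto
    also have "\<dots> \<longleftrightarrow> (\<forall>j\<le>m. Y (real j * h) \<omega> \<in> A' (m - j))"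
    proof (intro iffI allI impI)
      fix j assume "\<forall>i\<le>m. Y (real (m - i) * h) \<omega> \<in> A' i" "j \<le> m"
      then show "Y (real j * h) \<omega> \<in> A' (m - j)"
        by (metis diff_diff_cancel diff_le_self)
    next
      fix i assume "\<forall>j\<le>m. Y (real j * h) \<omega> \<in> A' (m - j)" "i \<le> m"
      then show "Y (real (m - i) * h) \<omega> \<in> A' i"
        by (metis diff_diff_cancel diff_le_self)
    qed
    finally show ?thesis .
  qed
  ultimately show ?thesis
    using ctmc_grid_reversal[OF pos X Y \<open>0 \<le> h\<close>, of m A'] \<open>real m * h = s\<close> by simp
qed

lemma ctmc_path_reversal:
  fixes Q :: "'s::finite \<Rightarrow> 's \<Rightarrow> real"
  assumes pos: "\<And>x. \<pi> x > 0" and X: "ctmc Q y M X" and Y: "ctmc (reversed_gen Q \<pi>) w N Y"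
    and "0 \<le> s" and C: "C \<in> sets (PiM (dyadic_points s) (\<lambda>_. count_space (UNIV::'s set)))"
  shows "\<pi> y * measure M {\<omega>\<in>space M. (\<lambda>t\<in>dyadic_points s. X t \<omega>) \<in> C \<and> X s \<omega> = w}
       = \<pi> w * measure N {\<omega>\<in>space N. (\<lambda>t\<in>dyadic_points s. Y (s - t) \<omega>) \<in> C \<and> Y s \<omega> = y}"
proof (rule measure_restricted_eq_PiM[OF _ _ _ _ _ _ _ _ _ C])
  show "finite_measure M" "finite_measure N"
    using ctmc_prob_space[OF X] ctmc_prob_space[OF Y] by (simp_all add: prob_space_def)
  show "(\<lambda>\<omega>. \<lambda>t\<in>dyadic_points s. X t \<omega>) \<in> M \<rightarrow>\<^sub>M PiM (dyadic_points s) (\<lambda>_. count_space UNIV)"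
    "(\<lambda>\<omega>. \<lambda>t\<in>dyadic_points s. Y (s - t) \<omega>) \<in> N \<rightarrow>\<^sub>M PiM (dyadic_points s) (\<lambda>_. count_space UNIV)"
    using X Y \<open>0 \<le> s\<close> by (auto intro!: ctmc_measurable_samples dest: dyadic_points_bounds)
  show "{\<omega>\<in>space M. X s \<omega> = w} \<in> sets M" "{\<omega>\<in>space N. Y s \<omega> = y} \<in> sets N"
    using ctmc_measurable[OF X \<open>0 \<le> s\<close>] ctmc_measurable[OF Y \<open>0 \<le> s\<close>] by simp_all
  show "0 \<le> \<pi> y" "0 \<le> \<pi> w"
    using pos less_imp_le by blast+
qed (rule ctmc_cylinder_reversal[OF pos X Y \<open>0 \<le> s\<close>])

lemma ctmc_measurable_occ:
  assumes X: "ctmc Q y M X" and "0 \<le> s"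
  shows "occ s X \<in> M \<rightarrow>\<^sub>M PiM UNIV (\<lambda>_. borel)"
proof -
  have limit: "(\<lambda>\<omega>. occ_limit s (\<lambda>t\<in>dyadic_points s. X t \<omega>)) \<in> M \<rightarrow>\<^sub>M PiM UNIV (\<lambda>_. borel)"
    using X \<open>0 \<le> s\<close>
    by (intro measurable_comp[OF ctmc_measurable_samples measurable_occ_limit, unfolded comp_def])
      (auto dest: dyadic_points_bounds)
  have "occ s X \<omega> = occ_limit s (\<lambda>t\<in>dyadic_points s. X t \<omega>)" if "\<omega> \<in> space M" for \<omega>
    using occ_eq_occ_limit[where X = X and \<omega> = \<omega>, OF ctmc_regular_path[OF X that] \<open>0 \<le> s\<close>] .
  then show ?thesis
    using limit by (rule measurable_cong[THEN iffD2])
qed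

lemma ctmc_occ_reversal:
  fixes Q :: "'s::finite \<Rightarrow> 's \<Rightarrow> real"
  assumes pos: "\<And>x. \<pi> x > 0" and X: "ctmc Q y M X" and Y: "ctmc (reversed_gen Q \<pi>) w N Y"
    and "0 \<le> s" and B: "B \<in> sets (PiM UNIV (\<lambda>_::'s. borel))"
  shows "\<pi> y * measure M {\<omega>\<in>space M. occ s X \<omega> \<in> B \<and> X s \<omega> = w}
       = \<pi> w * measure N {\<omega>\<in>space N. occ s Y \<omega> \<in> B \<and> Y s \<omega> = y}"
proof -
  define C where "C = occ_limit s -` B \<inter> space (PiM (dyadic_points s) (\<lambda>_. count_space (UNIV::'s set)))"
  have C: "C \<in> sets (PiM (dyadic_points s) (\<lambda>_. count_space UNIV))"
    unfolding C_def using measurable_occ_limit B by (rule measurable_sets)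
  have "occ s X \<omega> \<in> B \<longleftrightarrow> (\<lambda>t\<in>dyadic_points s. X t \<omega>) \<in> C" if "\<omega> \<in> space M" for \<omega>
    unfolding C_def occ_eq_occ_limit[where X = X and \<omega> = \<omega>, OF ctmc_regular_path[OF X that] \<open>0 \<le> s\<close>]
    by (simp add: space_PiM)
  then have "{\<omega>\<in>space M. occ s X \<omega> \<in> B \<and> X s \<omega> = w}
      = {\<omega>\<in>space M. (\<lambda>t\<in>dyadic_points s. X t \<omega>) \<in> C \<and> X s \<omega> = w}"
    by blast
  moreover have "occ s Y \<omega> \<in> B \<longleftrightarrow> (\<lambda>t\<in>dyadic_points s. Y (s - t) \<omega>) \<in> C" if "\<omega> \<in> space N" for \<omega>
    unfolding C_def occ_eq_occ_limit_reflected[where X = Y and \<omega> = \<omega>, OF ctmc_regular_path[OF Y that] \<open>0 \<le> s\<close>]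
    by (simp add: space_PiM)
  then have "{\<omega>\<in>space N. occ s Y \<omega> \<in> B \<and> Y s \<omega> = y}
      = {\<omega>\<in>space N. (\<lambda>t\<in>dyadic_points s. Y (s - t) \<omega>) \<in> C \<and> Y s \<omega> = y}"
    by blast
  ultimately show ?thesis
    using ctmc_path_reversal[OF pos X Y \<open>0 \<le> s\<close> C] by simp
qed

lemma (in finite_measure) measure_eq_sum_values:
  fixes Z :: "'a \<Rightarrow> 's::finite"
  assumes "A \<in> sets M" "Z \<in> M \<rightarrow>\<^sub>M count_space UNIV"
  shows "measure M A = (\<Sum>w\<in>UNIV. measure M {\<omega>\<in>A. Z \<omega> = w})"
proof -
  have "{\<omega>\<in>A. Z \<omega> = w} = A \<inter> (Z -` {w} \<inter> space M)" for w
    using sets.sets_into_space[OF assms(1)] by blast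
  then have "{\<omega>\<in>A. Z \<omega> = w} \<in> sets M" for w
    using assms by (simp add: sets.Int measurable_sets)
  moreover have "A = (\<Union>w. {\<omega>\<in>A. Z \<omega> = w})"
    by blast
  ultimately show ?thesis
    by (subst finite_measure_finite_Union[symmetric]) (auto simp: disjoint_family_on_def)
qed

lemma ctmc_occ_le_reversed_max:
  fixes Q :: "'s::finite \<Rightarrow> 's \<Rightarrow> real"
  assumes pos: "\<And>x. \<pi> x > 0" and sum_\<pi>: "(\<Sum>x\<in>UNIV. \<pi> x) = 1"
    and X: "ctmc Q y M X" and Y: "\<And>z. ctmc (reversed_gen Q \<pi>) z (N z) (Y z)"
    and "0 \<le> s" and B: "B \<in> sets (PiM UNIV (\<lambda>_::'s. borel))"
  shows "\<pi> y * measure M {\<omega>\<in>space M. occ s X \<omega> \<in> B}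
       \<le> (MAX z. measure (N z) {\<omega>\<in>space (N z). occ s (Y z) \<omega> \<in> B})"
proof -
  interpret M: prob_space M
    using X by (rule ctmc_prob_space)
  define m where "m = (MAX z. measure (N z) {\<omega>\<in>space (N z). occ s (Y z) \<omega> \<in> B})"
  have event: "{\<omega>\<in>space M. occ s X \<omega> \<in> B} \<in> sets M"
    using ctmc_measurable_occ[OF X \<open>0 \<le> s\<close>] B by measurable
  have "\<pi> y * measure M {\<omega>\<in>space M. occ s X \<omega> \<in> B \<and> X s \<omega> = w} \<le> \<pi> w * m" for w
  proof -
    interpret N: prob_space "N w"
      using Y by (rule ctmc_prob_space)
    have "{\<omega>\<in>space (N w). occ s (Y w) \<omega> \<in> B} \<in> sets (N w)"
      using ctmc_measurable_occ[OF Y \<open>0 \<le> s\<close>] B by measurable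
    then have "measure (N w) {\<omega>\<in>space (N w). occ s (Y w) \<omega> \<in> B \<and> Y w s \<omega> = y}
        \<le> measure (N w) {\<omega>\<in>space (N w). occ s (Y w) \<omega> \<in> B}"
      by (rule N.finite_measure_mono[rotated]) auto
    also have "\<dots> \<le> m"
      unfolding m_def by (rule Max_ge) auto
    finally show ?thesis
      using ctmc_occ_reversal[OF pos X Y \<open>0 \<le> s\<close> B] pos[of w] by (simp add: mult_left_mono)
  qed
  then have "\<pi> y * measure M {\<omega>\<in>space M. occ s X \<omega> \<in> B} \<le> (\<Sum>w\<in>UNIV. \<pi> w * m)"
    unfolding M.measure_eq_sum_values[OF event ctmc_measurable[OF X \<open>0 \<le> s\<close>]] sum_distrib_left
    by (intro sum_mono) simp
  also have "\<dots> = m"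
    by (simp add: sum_distrib_right[symmetric] sum_\<pi>)
  finally show ?thesis
    unfolding m_def .
qed

theorem lemmaA1:
  fixes Q :: "'s::finite \<Rightarrow> 's \<Rightarrow> real" and \<pi> :: "'s \<Rightarrow> real"
  assumes "generator Q" and "irreducible_gen Q" and "stationary Q \<pi>"
  shows "\<exists>c. \<forall>s\<ge>0. \<forall>B \<in> sets (PiM UNIV (\<lambda>_::'s. borel)). \<forall>y.
           \<forall>(M::'w measure) X. ctmc Q y M X \<longrightarrow>
           (\<forall>(N::'s \<Rightarrow> 'v measure) Y. (\<forall>z. ctmc (reversed_gen Q \<pi>) z (N z) (Y z)) \<longrightarrow>
              measure M {\<omega>\<in>space M. occ s X \<omega> \<in> B}
                \<le> c * (MAX z. measure (N z) {\<omega>\<in>space (N z). occ s (Y z) \<omega> \<in> B}))"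
proof (intro exI allI impI ballI)
  fix s :: real and B :: "('s \<Rightarrow> real) set" and y and M :: "'w measure" and X
    and N :: "'s \<Rightarrow> 'v measure" and Y
  assume "0 \<le> s" "B \<in> sets (PiM UNIV (\<lambda>_::'s. borel))" "ctmc Q y M X"
    and "\<forall>z. ctmc (reversed_gen Q \<pi>) z (N z) (Y z)"
  have pos: "\<pi> x > 0" for x
    using stationary_pos[OF assms] .
  define m where "m = (MAX z. measure (N z) {\<omega>\<in>space (N z). occ s (Y z) \<omega> \<in> B})"
  have "\<pi> y * measure M {\<omega>\<in>space M. occ s X \<omega> \<in> B} \<le> m"
    unfolding m_def using assms(3) pos \<open>0 \<le> s\<close> \<open>B \<in> _\<close> \<open>ctmc Q y M X\<close> \<open>\<forall>z. _\<close>
    by (intro ctmc_occ_le_reversed_max) (auto simp: stationary_def)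
  then have "measure M {\<omega>\<in>space M. occ s X \<omega> \<in> B} \<le> 1 / \<pi> y * m"
    using pos[of y] by (simp add: field_simps mult.commute)
  also have "\<dots> \<le> (MAX z. 1 / \<pi> z) * m"
  proof (rule mult_right_mono)
    have "measure (N y) {\<omega>\<in>space (N y). occ s (Y y) \<omega> \<in> B} \<le> m"
      unfolding m_def by (rule Max_ge) auto
    then show "0 \<le> m"
      using measure_nonneg order.trans by blast
  qed (rule Max_ge, auto)
  finally show "measure M {\<omega>\<in>space M. occ s X \<omega> \<in> B} \<le> (MAX z. 1 / \<pi> z) * m" .
qed

end
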